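(* Let $n\geq1$, $J=\{[1,2],[3,4],\ldots,[2n-1,2n]\}$, and $A\in{\cal M}_{2n}$. Let $C_1,\ldots,C_t$ be the connected components of the spanning subgraph of $K_{2n}$ with edge set $J\cup A$, with $C_t$ containing the edge $[2n-1,2n]$. Let $2\mu_i$ be the number of vertices of $C_i$, so that $\{2\mu_1,\ldots,2\mu_t\}$ is the multiset of parts of $d(J,A)$. (i) Let $s$ be a vertex of $C_j$ for some $j\in\{1,\ldots,t-1\}$, and put $A'=(s,2n-1)\cdot A$. Then the multiset of parts of $d(A',J)$ is $(\{2\mu_1,\ldots,2\mu_t\}\setminus\{2\mu_j,2\mu_t\})\cup\{2(\mu_j+\mu_t)\}$, and $2(\mu_j+\mu_t)$ is the number of vertices of the component of $A'\cup J$ containing $[2n-1,2n]$. (ii) Traverse the vertices of the alternating cycle $C_t$ in cyclic order, starting at $2n$ and going next to $2n-1$, and list them as $2n,2n-1,i_1,i_2,\ldots,i_{2k-1},i_{2k}$, where $k\geq0$ and $2\mu_t=2k+2$. Let $j\in\{1,\ldots,k\}$. (a) If $A'=(i_{2j},2n-1)\cdot A$, then the multiset of parts of $d(A',J)$ is $\{2\mu_1,\ldots,2\mu_{t-1},2\mu_t-2j,2j\}$, and $2\mu_t-2j$ is the number of vertices of the component of $A'\cup J$ containing $[2n-1,2n]$. (b) If $A'=(i_{2j-1},2n-1)\cdot A$, then the multiset of parts of $d(A',J)$ is $\{2\mu_1,\ldots,2\mu_t\}$, and $2\mu_t$ is the number of vertices of the component of $A'\cup J$ containing $[2n-1,2n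]$.
   Context: $K_{2n}$ is the complete graph on $\{1,\ldots,2n\}$, $[i,j]$ denotes the edge joining $i$ and $j$, and ${\cal M}_{2n}$ is the set of perfect matchings of $K_{2n}$. For $A,B\in{\cal M}_{2n}$, $d(A,B)$ is the partition of $2n$ whose parts are the numbers of vertices of the connected components of the spanning subgraph with edge set $A\cup B$. The components of $J\cup A$ are alternating cycles, or single edges common to $J$ and $A$. A permutation $\sigma\in S_{2n}$ acts on matchings by relabelling vertices: $\sigma\cdot A=\{[\sigma(a),\sigma(b)]:[a,b]\in A\}$. $(s,2n-1)$ denotes the transposition of $s$ and $2n-1$. *)

theory Defs
  imports Main "HOL-Library.Multiset" "HOL-Combinatorics.Transposition"
begin

definition verts :: "nat \<Rightarrow> nat set" where
  "verts n = {1..2*n}"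

text \<open>Edges [i,j] of K_{2n} are 2-element sets {i,j}.\<close>
definition edges_K :: "nat \<Rightarrow> nat set set" where
  "edges_K n = {{a, b} | a b. a \<noteq> b \<and> a \<in> verts n \<and> b \<in> verts n}"

definition perfect_matchings :: "nat \<Rightarrow> nat set set set" where
  "perfect_matchings n = {M. M \<subseteq> edges_K n \<and> (\<forall>v \<in> verts n. \<exists>!e. e \<in> M \<and> v \<in> e)}"

definition Jm :: "nat \<Rightarrow> nat set set" where
  "Jm n = {{2*i - 1, 2*i} | i. 1 \<le> i \<and> i \<le> n}"

definition act :: "(nat \<Rightarrow> nat) \<Rightarrow> nat set set \<Rightarrow> nat set set" where
  "act \<sigma> A = (\<lambda>e. \<sigma> ` e) ` A"

definition adj :: "nat set set \<Rightarrow> (nat \<times> nat) set" where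
  "adj E = {(u, v). {u, v} \<in> E}"

definition comp :: "nat set set \<Rightarrow> nat \<Rightarrow> nat set" where
  "comp E v = {w. (v, w) \<in> (adj E)\<^sup>*}"

definition components :: "nat \<Rightarrow> nat set set \<Rightarrow> nat set set" where
  "components n E = comp E ` verts n"

definition dist :: "nat \<Rightarrow> nat set set \<Rightarrow> nat set set \<Rightarrow> nat multiset" where
  "dist n A B = image_mset card (mset_set (components n (A \<union> B)))"

end

theory Submission
  imports Defs "HOL-Combinatorics.Permutations"
begin

text \<open>
  The components of \<open>J \<union> A\<close> are alternating cycles, and relabelling \<open>A\<close> by the transposition
  of \<open>x\<close> and \<open>t\<close> only replaces the \<open>A\<close>-edges \<open>{x, x'}\<close> and \<open>{t, t'}\<close> by \<open>{t, x'}\<close> and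
  \<open>{x, t'}\<close>. Components avoiding \<open>x\<close> and \<open>t\<close> are untouched, so \<open>d\<close> only changes on the
  components of \<open>x\<close> and \<open>t\<close>.

  If these are different cycles, each stays connected after deleting its edge at \<open>x\<close> resp. \<open>t\<close>,
  and the two new edges merge them into one cycle. If both lie on one cycle, listed as
  \<open>L!0, L!1, \<dots>, L!(N-1)\<close> with \<open>{L!0, L!1} \<in> J\<close>, \<open>t = L!1\<close> and \<open>x = L!p\<close>, the new edges are
  \<open>{L!1, L!(p+1)}\<close> and \<open>{L!p, L!2}\<close> for odd \<open>p\<close>, which split the cycle into
  \<open>L!0, L!1, L!(p+1), \<dots>, L!(N-1)\<close> and \<open>L!2, \<dots>, L!p\<close>; for even \<open>p\<close> they are
  \<open>{L!1, L!(p-1)}\<close> and \<open>{L!p, L!2}\<close>, which reroute the cycle as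
  \<open>L!0, L!1, L!(p-1), \<dots>, L!2, L!p, \<dots>, L!(N-1)\<close>.
\<close>

definition mate :: "nat set set \<Rightarrow> nat \<Rightarrow> nat" where
  "mate M v = (THE w. {v, w} \<in> M)"

lemma perfect_matching_mate:
  assumes M: "M \<in> perfect_matchings n" and v: "v \<in> verts n"
  shows mate_iff: "{v, w} \<in> M \<longleftrightarrow> w = mate M v"
    and mate_in_verts: "mate M v \<in> verts n"
    and mate_neq: "mate M v \<noteq> v"
proof -
  obtain e where e: "e \<in> M" "v \<in> e" and uniq: "\<And>e'. e' \<in> M \<Longrightarrow> v \<in> e' \<Longrightarrow> e' = e"
    using M v unfolding perfect_matchings_def by blast
  from e M obtain w0 where w0: "e = {v, w0}" "w0 \<noteq> v" "w0 \<in> verts n"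
    unfolding perfect_matchings_def edges_K_def by blast
  have iff: "{v, w} \<in> M \<longleftrightarrow> w = w0" for w
    using uniq[of "{v, w}"] e w0 by (auto simp: doubleton_eq_iff)
  then have "mate M v = w0"
    unfolding mate_def by blast
  with iff w0 show "{v, w} \<in> M \<longleftrightarrow> w = mate M v" "mate M v \<in> verts n" "mate M v \<noteq> v"
    by simp_all
qed

lemma mate_edge: "M \<in> perfect_matchings n \<Longrightarrow> v \<in> verts n \<Longrightarrow> {v, mate M v} \<in> M"
  by (simp add: mate_iff)

lemma mate_mate:
  assumes "M \<in> perfect_matchings n" "v \<in> verts n"
  shows "mate M (mate M v) = v"
  using mate_iff[OF assms(1) mate_in_verts[OF assms], of v] mate_edge[OF assms]
  by (simp add: insert_commute)

lemma edge_in_verts: "M \<in> perfect_matchings n \<Longrightarrow> {u, w} \<in> M \<Longrightarrow> u \<in> verts n"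
  unfolding perfect_matchings_def edges_K_def by (auto simp: doubleton_eq_iff)

lemma adj_Un_iff:
  assumes "J \<in> perfect_matchings n" "M \<in> perfect_matchings n"
  shows "(u, w) \<in> adj (J \<union> M) \<longleftrightarrow> u \<in> verts n \<and> (w = mate J u \<or> w = mate M u)"
proof -
  have "{u, w} \<in> N \<longleftrightarrow> u \<in> verts n \<and> w = mate N u" if "N \<in> perfect_matchings n" for N
    using that edge_in_verts mate_iff by blast
  then show ?thesis
    using assms unfolding adj_def by blast
qed

lemma Jm_perfect_matching: "Jm n \<in> perfect_matchings n"
proof -
  have "Jm n \<subseteq> edges_K n"
    unfolding Jm_def edges_K_def verts_def by force
  moreover have "\<exists>!e. e \<in> Jm n \<and> v \<in> e" if "v \<in> verts n" for v
  proof
    let ?i = "(v + 1) div 2"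
    show "{2 * ?i - 1, 2 * ?i} \<in> Jm n \<and> v \<in> {2 * ?i - 1, 2 * ?i}"
      using that unfolding Jm_def verts_def by auto
    show "e = {2 * ?i - 1, 2 * ?i}" if "e \<in> Jm n \<and> v \<in> e" for e
      using that unfolding Jm_def by auto
  qed
  ultimately show ?thesis
    unfolding perfect_matchings_def by blast
qed

lemma doubleton_in_act_iff:
  assumes "\<sigma> permutes V"
  shows "{u, w} \<in> act \<sigma> A \<longleftrightarrow> {inv \<sigma> u, inv \<sigma> w} \<in> A"
proof -
  have "\<sigma> ` e = {u, w} \<longleftrightarrow> e = {inv \<sigma> u, inv \<sigma> w}" for e
  proof
    assume "\<sigma> ` e = {u, w}"
    then have "inv \<sigma> ` \<sigma> ` e = {inv \<sigma> u, inv \<sigma> w}"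
      by simp
    then show "e = {inv \<sigma> u, inv \<sigma> w}"
      by (simp add: image_inv_f_f[OF permutes_inj[OF assms]])
  qed (simp add: permutes_inverses(1)[OF assms])
  then show ?thesis
    unfolding act_def image_iff by metis
qed

lemma act_perfect_matching:
  assumes A: "A \<in> perfect_matchings n" and \<sigma>: "\<sigma> permutes verts n"
  shows "act \<sigma> A \<in> perfect_matchings n"
    and mate_act: "v \<in> verts n \<Longrightarrow> mate (act \<sigma> A) v = \<sigma> (mate A (inv \<sigma> v))"
proof -
  have in_act_iff: "{v, w} \<in> act \<sigma> A \<longleftrightarrow> w = \<sigma> (mate A (inv \<sigma> v))" if "v \<in> verts n" for v w
  proof -
    have "inv \<sigma> v \<in> verts n"
      using permutes_in_image[OF permutes_inv[OF \<sigma>]] that by simp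
    then have "{v, w} \<in> act \<sigma> A \<longleftrightarrow> inv \<sigma> w = mate A (inv \<sigma> v)"
      using doubleton_in_act_iff[OF \<sigma>] mate_iff[OF A] by simp
    also have "\<dots> \<longleftrightarrow> w = \<sigma> (mate A (inv \<sigma> v))"
      using permutes_inverses[OF \<sigma>] by metis
    finally show ?thesis .
  qed
  have edges: "act \<sigma> A \<subseteq> edges_K n"
  proof
    fix e' assume "e' \<in> act \<sigma> A"
    then obtain a b where "e' = {\<sigma> a, \<sigma> b}" "a \<noteq> b" "a \<in> verts n" "b \<in> verts n"
      using A unfolding act_def perfect_matchings_def edges_K_def by auto
    then show "e' \<in> edges_K n"
      using permutes_in_image[OF \<sigma>] permutes_inj[OF \<sigma>]
      unfolding edges_K_def by (blast dest: injD)
  qed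
  have "\<exists>!e. e \<in> act \<sigma> A \<and> v \<in> e" if v: "v \<in> verts n" for v
  proof
    show "{v, \<sigma> (mate A (inv \<sigma> v))} \<in> act \<sigma> A \<and> v \<in> {v, \<sigma> (mate A (inv \<sigma> v))}"
      using in_act_iff[OF v] by simp
    fix e assume e: "e \<in> act \<sigma> A \<and> v \<in> e"
    then obtain w where "e = {v, w}"
      using edges unfolding edges_K_def by blast
    with e show "e = {v, \<sigma> (mate A (inv \<sigma> v))}"
      using in_act_iff[OF v] by simp
  qed
  with edges show P: "act \<sigma> A \<in> perfect_matchings n"
    unfolding perfect_matchings_def by blast
  show "mate (act \<sigma> A) v = \<sigma> (mate A (inv \<sigma> v))" if "v \<in> verts n"
    using in_act_iff[OF that] mate_iff[OF P that] by blast
qed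

lemma adj_sym: "sym (adj E)"
  unfolding adj_def by (auto intro: symI simp: insert_commute)

lemma comp_refl: "v \<in> comp E v"
  unfolding comp_def by simp

lemma comp_eq: "w \<in> comp E v \<Longrightarrow> comp E w = comp E v"
  using symD[OF sym_rtrancl[OF adj_sym]] rtrancl_trans unfolding comp_def by fast

lemma comp_edge: "u \<in> comp E v \<Longrightarrow> {u, w} \<in> E \<Longrightarrow> w \<in> comp E v"
  unfolding comp_def adj_def by (simp add: rtrancl.rtrancl_into_rtrancl)

lemma comp_adj: "(u, w) \<in> adj E \<Longrightarrow> comp E w = comp E u"
  by (rule comp_eq) (simp add: comp_def)

lemma comp_disjoint: "comp E u \<noteq> comp E v \<Longrightarrow> comp E u \<inter> comp E v = {}"
  using comp_eq by blast

lemma comp_image_comp: "comp E ` comp E v = {comp E v}"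
  using comp_eq comp_refl by blast

lemma comp_subset_closed:
  assumes "v \<in> X" and closed: "\<And>u w. u \<in> X \<Longrightarrow> (u, w) \<in> adj E \<Longrightarrow> w \<in> X"
  shows "comp E v \<subseteq> X"
proof
  fix w assume "w \<in> comp E v"
  then have "(v, w) \<in> (adj E)\<^sup>*"
    by (simp add: comp_def)
  then show "w \<in> X"
    by (induction rule: rtrancl_induct) (use assms in blast)+
qed

lemma comp_eq_along_path:
  assumes step: "\<And>i. a \<le> i \<Longrightarrow> i < b \<Longrightarrow> (x i, x (Suc i)) \<in> adj E"
    and "a \<le> c" "c \<le> b"
  shows "comp E (x c) = comp E (x a)"
  using assms(2,3)
proof (induction c rule: dec_induct)
  case (step i)
  then show ?case
    using comp_adj[OF assms(1)] by simp
qed simp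

lemma finite_verts: "finite (verts n)"
  by (simp add: verts_def)

lemma components_split:
  assumes "S \<subseteq> verts n" and closed: "\<And>v. v \<in> S \<Longrightarrow> comp E v \<subseteq> S"
  shows "mset_set (components n E) = mset_set (comp E ` (verts n - S)) + mset_set (comp E ` S)"
proof -
  have "components n E = comp E ` (verts n - S) \<union> comp E ` S"
    unfolding components_def using assms(1) by blast
  moreover have "comp E ` (verts n - S) \<inter> comp E ` S = {}"
    using closed comp_refl by fastforce
  moreover have "finite S"
    using assms(1) finite_verts finite_subset by blast
  ultimately show ?thesis
    by (simp add: mset_set_Union finite_verts)
qed

lemma comp_subset_mate_closed:
  assumes "J \<in> perfect_matchings n" "M \<in> perfect_matchings n" "v \<in> X"
    and "\<And>u. u \<in> X \<Longrightarrow> u \<in> verts n \<Longrightarrow> mate J u \<in> X \<and> mate M u \<in> X"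
  shows "comp (J \<union> M) v \<subseteq> X"
proof (rule comp_subset_closed[OF assms(3)])
  fix u w assume "u \<in> X" "(u, w) \<in> adj (J \<union> M)"
  then show "w \<in> X"
    using assms(4)[of u] unfolding adj_Un_iff[OF assms(1,2)] by auto
qed

lemma comp_subset_verts:
  assumes "J \<in> perfect_matchings n" "M \<in> perfect_matchings n" "v \<in> verts n"
  shows "comp (J \<union> M) v \<subseteq> verts n"
  using comp_subset_mate_closed[OF assms] mate_in_verts assms(1,2) by blast

lemma finite_comp:
  assumes "J \<in> perfect_matchings n" "M \<in> perfect_matchings n" "v \<in> verts n"
  shows "finite (comp (J \<union> M) v)"
  using comp_subset_verts[OF assms] finite_verts finite_subset by blast

lemma mate_in_comp:
  assumes "J \<in> perfect_matchings n" "M \<in> perfect_matchings n" "u \<in> verts n"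
  shows "mate J u \<in> comp (J \<union> M) u" and "mate M u \<in> comp (J \<union> M) u"
  using adj_Un_iff[OF assms(1,2)] assms(3) by (auto simp: comp_def)

section \<open>Swapping vertices of two different components\<close>

lemma even_card_involution:
  fixes f :: "'a::linorder \<Rightarrow> 'a"
  assumes "finite Y" and f: "\<And>y. y \<in> Y \<Longrightarrow> f y \<in> Y \<and> f y \<noteq> y \<and> f (f y) = y"
  shows "even (card Y)"
proof -
  let ?P = "{y \<in> Y. y < f y}"
  have Y: "Y = ?P \<union> f ` ?P"
  proof
    show "Y \<subseteq> ?P \<union> f ` ?P"
    proof
      fix y assume y: "y \<in> Y"
      show "y \<in> ?P \<union> f ` ?P"
      proof (cases "y < f y")
        case False
        with f[OF y] have "f y \<in> ?P"
          by auto
        then have "f (f y) \<in> f ` ?P"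
          by (rule imageI)
        with f[OF y] show ?thesis
          by simp
      qed (use y in simp)
    qed
  qed (use f in auto)
  have "?P \<inter> f ` ?P = {}"
    using f by fastforce
  then have "card (?P \<union> f ` ?P) = card ?P + card (f ` ?P)"
    using assms(1) by (simp add: card_Un_disjoint)
  moreover have "inj_on f ?P"
  proof (rule inj_onI)
    fix a b assume "a \<in> ?P" "b \<in> ?P" "f a = f b"
    then have "f (f a) = f (f b)"
      by simp
    with \<open>a \<in> ?P\<close> \<open>b \<in> ?P\<close> show "a = b"
      using f by simp
  qed
  ultimately have "card Y = 2 * card ?P"
    using Y by (simp add: card_image)
  then show ?thesis
    by simp
qed

text \<open>Every edge of \<open>J \<union> M\<close> lies on a cycle: otherwise the set \<open>X\<close> of vertices reachable
  from \<open>x\<close> without the edge \<open>{x, mate M x}\<close> is paired up by \<open>J\<close>, while \<open>X - {x}\<close> is paired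
  up by \<open>M\<close>, so \<open>card X\<close> would be both even and odd.\<close>
lemma mate_reachable_avoiding_edge:
  assumes J: "J \<in> perfect_matchings n" and M: "M \<in> perfect_matchings n" and x: "x \<in> verts n"
  shows "mate M x \<in> comp (J \<union> (M - {{x, mate M x}})) x"
proof (rule ccontr)
  let ?b = "mate M x"
  define X where "X = comp (J \<union> (M - {{x, ?b}})) x"
  assume "?b \<notin> comp (J \<union> (M - {{x, ?b}})) x"
  then have b: "?b \<notin> X"
    by (simp add: X_def)
  have step: "w \<in> X" if "u \<in> X" "{u, w} \<in> J \<union> (M - {{x, ?b}})" for u w
    using that unfolding X_def by (rule comp_edge)
  have "X \<subseteq> verts n"
    unfolding X_def
  proof (rule comp_subset_closed[OF x])
    fix u w assume "(u, w) \<in> adj (J \<union> (M - {{x, ?b}}))"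
    then have "{w, u} \<in> J \<union> M"
      by (auto simp: adj_def insert_commute)
    then show "w \<in> verts n"
      using edge_in_verts[OF J] edge_in_verts[OF M] by blast
  qed
  then have fin: "finite X"
    using finite_verts finite_subset by blast
  have "even (card X)"
  proof (rule even_card_involution[OF fin])
    fix y assume y: "y \<in> X"
    with \<open>X \<subseteq> verts n\<close> have yv: "y \<in> verts n"
      by blast
    show "mate J y \<in> X \<and> mate J y \<noteq> y \<and> mate J (mate J y) = y"
      using step[OF y] mate_edge[OF J yv] mate_neq[OF J yv] mate_mate[OF J yv] by blast
  qed
  moreover have "even (card (X - {x}))"
  proof (rule even_card_involution)
    fix y assume y: "y \<in> X - {x}"
    with b \<open>X \<subseteq> verts n\<close> have yv: "y \<in> verts n" and "y \<noteq> ?b" "y \<noteq> x"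
      by auto
    then have "{y, mate M y} \<noteq> {x, ?b}"
      by (auto simp: doubleton_eq_iff)
    then have "mate M y \<in> X"
      using step[of y "mate M y"] y mate_edge[OF M yv] by blast
    moreover have "mate M y \<noteq> x"
      using \<open>y \<noteq> ?b\<close> mate_mate[OF M yv] by auto
    ultimately show "mate M y \<in> X - {x} \<and> mate M y \<noteq> y \<and> mate M (mate M y) = y"
      using mate_neq[OF M yv] mate_mate[OF M yv] by blast
  qed (use fin in simp)
  moreover have "x \<in> X"
    unfolding X_def by (rule comp_refl)
  then have "card X = Suc (card (X - {x}))"
    using card_Suc_Diff1[OF fin] by simp
  ultimately show False
    by simp
qed

lemma edge_in_act_if_fixed:
  assumes "{u, w} \<in> A" "\<sigma> u = u" "\<sigma> w = w"
  shows "{u, w} \<in> act \<sigma> A"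
proof -
  have "{u, w} = \<sigma> ` {u, w}"
    using assms(2,3) by simp
  then show ?thesis
    unfolding act_def using assms(1) by (rule image_eqI)
qed

lemma comp_subset_comp_delete_mate_edge:
  assumes J: "J \<in> perfect_matchings n" and A: "A \<in> perfect_matchings n" and x: "x \<in> verts n"
  shows "comp (J \<union> A) x \<subseteq> comp (J \<union> (A - {{x, mate A x}})) x"
proof (rule comp_subset_mate_closed[OF J A comp_refl])
  let ?b = "mate A x" and ?Y = "comp (J \<union> (A - {{x, mate A x}})) x"
  fix u assume u: "u \<in> ?Y" "u \<in> verts n"
  consider "u = x" | "u = ?b" | "u \<noteq> x" "u \<noteq> ?b"
    by blast
  then have "mate A u \<in> ?Y"
  proof cases
    case 1
    then show ?thesis
      using mate_reachable_avoiding_edge[OF J A x] by simp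
  next
    case 2
    then show ?thesis
      using mate_mate[OF A x] comp_refl by simp
  next
    case 3
    then have "{u, mate A u} \<noteq> {x, ?b}"
      by (auto simp: doubleton_eq_iff)
    then show ?thesis
      using comp_edge[OF u(1)] mate_edge[OF A u(2)] by blast
  qed
  then show "mate J u \<in> ?Y \<and> mate A u \<in> ?Y"
    using comp_edge[OF u(1)] mate_edge[OF J u(2)] by blast
qed

lemma edge_avoids_vertex:
  assumes A: "A \<in> perfect_matchings n" and x: "x \<in> verts n"
    and "{u, w} \<in> A" "{u, w} \<noteq> {x, mate A x}"
  shows "u \<noteq> x" and "w \<noteq> x"
  using assms(3,4) mate_iff[OF A x, of w] mate_iff[OF A x, of u] by (auto simp: insert_commute)

lemma comp_subset_comp_swap:
  assumes J: "J \<in> perfect_matchings n" and A: "A \<in> perfect_matchings n"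
    and x: "x \<in> verts n" and z: "z \<notin> comp (J \<union> A) x"
  shows "comp (J \<union> A) x \<subseteq> comp (J \<union> act (transpose x z) A) x"
proof -
  let ?b = "mate A x" and ?C = "comp (J \<union> A) x" and ?E' = "J \<union> act (transpose x z) A"
  have "comp (J \<union> (A - {{x, ?b}})) x \<subseteq> comp ?E' x \<inter> ?C"
  proof (rule comp_subset_closed)
    show "x \<in> comp ?E' x \<inter> ?C"
      by (simp add: comp_refl)
    fix u w assume u: "u \<in> comp ?E' x \<inter> ?C" and "(u, w) \<in> adj (J \<union> (A - {{x, ?b}}))"
    then have uw: "{u, w} \<in> J \<or> {u, w} \<in> A \<and> {u, w} \<noteq> {x, ?b}"
      by (simp add: adj_def)
    with u have "w \<in> ?C"
      using comp_edge[of u "J \<union> A"] by blast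
    have "{u, w} \<in> ?E'"
    proof (cases "{u, w} \<in> J")
      case False
      with uw have uw_A: "{u, w} \<in> A" "{u, w} \<noteq> {x, ?b}"
        by auto
      moreover have "u \<noteq> z" "w \<noteq> z"
        using u \<open>w \<in> ?C\<close> z by auto
      ultimately show ?thesis
        using edge_avoids_vertex[OF A x uw_A] edge_in_act_if_fixed[OF uw_A(1)] by simp
    qed simp
    then show "w \<in> comp ?E' x \<inter> ?C"
      using u \<open>w \<in> ?C\<close> comp_edge by blast
  qed
  then show ?thesis
    using comp_subset_comp_delete_mate_edge[OF J A x] by blast
qed

lemma swap_within_closed_set:
  assumes J: "J \<in> perfect_matchings n" and A: "A \<in> perfect_matchings n"
    and S: "S \<subseteq> verts n" and closed: "\<And>v. v \<in> S \<Longrightarrow> comp (J \<union> A) v \<subseteq> S"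
    and x: "x \<in> S" and t: "t \<in> S"
  defines "A' \<equiv> act (transpose x t) A"
  shows comp_swap_outside: "v \<in> verts n - S \<Longrightarrow> comp (J \<union> A') v = comp (J \<union> A) v"
    and comp_swap_inside: "v \<in> S \<Longrightarrow> comp (J \<union> A') v \<subseteq> S"
proof -
  have \<sigma>: "transpose x t permutes verts n"
    using S x t by (auto intro: permutes_swap_id)
  have A': "A' \<in> perfect_matchings n"
    unfolding A'_def by (rule act_perfect_matching[OF A \<sigma>])
  have mate_A': "mate A' u = transpose x t (mate A (transpose x t u))" if "u \<in> verts n" for u
    unfolding A'_def using mate_act[OF A \<sigma> that] by simp
  have outside: "comp (J \<union> A) u \<inter> S = {}" if "u \<notin> S" for u
    using that closed comp_eq comp_refl by blast
  have mate_outside: "mate A' u = mate A u" if "u \<in> comp (J \<union> A) v" "u \<in> verts n" "u \<notin> S" for u v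
  proof -
    have "mate A u \<notin> S"
      using outside[OF that(3)] mate_in_comp(2)[OF J A that(2)] by blast
    moreover have "u \<noteq> x" "u \<noteq> t" "mate A u \<noteq> x" "mate A u \<noteq> t"
      using that(3) \<open>mate A u \<notin> S\<close> x t by blast+
    ultimately show ?thesis
      using mate_A'[OF that(2)] by simp
  qed
  show "comp (J \<union> A') v \<subseteq> S" if "v \<in> S"
  proof (rule comp_subset_mate_closed[OF J A' that])
    fix u assume u: "u \<in> S" "u \<in> verts n"
    have "transpose x t u \<in> S"
      using u x t by (auto simp: transpose_def)
    then have "mate A (transpose x t u) \<in> S"
      using closed mate_in_comp(2)[OF J A] S by blast
    then show "mate J u \<in> S \<and> mate A' u \<in> S"
      using closed mate_in_comp(1)[OF J A u(2)] u mate_A'[OF u(2)] x t by (auto simp: transpose_def)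
  qed
  show "comp (J \<union> A') v = comp (J \<union> A) v" if v: "v \<in> verts n - S"
  proof
    show sub: "comp (J \<union> A') v \<subseteq> comp (J \<union> A) v"
    proof (rule comp_subset_mate_closed[OF J A' comp_refl])
      fix u assume u: "u \<in> comp (J \<union> A) v" "u \<in> verts n"
      then have "u \<notin> S"
        using outside v by blast
      then show "mate J u \<in> comp (J \<union> A) v \<and> mate A' u \<in> comp (J \<union> A) v"
        using mate_outside[OF u] mate_in_comp[OF J A u(2)] comp_eq[OF u(1)] by simp
    qed
    show "comp (J \<union> A) v \<subseteq> comp (J \<union> A') v"
    proof (rule comp_subset_mate_closed[OF J A comp_refl])
      fix u assume u: "u \<in> comp (J \<union> A') v" "u \<in> verts n"
      then have u': "u \<in> comp (J \<union> A) v" "u \<notin> S"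
        using sub outside v by blast+
      then show "mate J u \<in> comp (J \<union> A') v \<and> mate A u \<in> comp (J \<union> A') v"
        using mate_outside[OF u'(1) u(2) u'(2)] mate_in_comp[OF J A' u(2)] comp_eq[OF u(1)] by simp
    qed
  qed
qed

lemma dist_swap_within_closed_set:
  assumes J: "J \<in> perfect_matchings n" and A: "A \<in> perfect_matchings n"
    and S: "S \<subseteq> verts n" and closed: "\<And>v. v \<in> S \<Longrightarrow> comp (J \<union> A) v \<subseteq> S"
    and x: "x \<in> S" and t: "t \<in> S"
  defines "A' \<equiv> act (transpose x t) A"
  shows "dist n A' J = dist n J A - image_mset card (mset_set (comp (J \<union> A) ` S))
                                  + image_mset card (mset_set (comp (J \<union> A') ` S))"
proof -
  note outside = comp_swap_outside[OF assms(1-6), folded A'_def]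
  note inside = comp_swap_inside[OF assms(1-6), folded A'_def]
  have "A' \<union> J = J \<union> A'"
    by blast
  moreover have "comp (J \<union> A') ` (verts n - S) = comp (J \<union> A) ` (verts n - S)"
    using outside by (rule image_cong[OF refl])
  ultimately have "mset_set (components n (A' \<union> J))
      = mset_set (comp (J \<union> A) ` (verts n - S)) + mset_set (comp (J \<union> A') ` S)"
    using components_split[OF S inside] by simp
  moreover have "mset_set (components n (J \<union> A))
      = mset_set (comp (J \<union> A) ` (verts n - S)) + mset_set (comp (J \<union> A) ` S)"
    using components_split[OF S closed] .
  ultimately show ?thesis
    unfolding dist_def by simp
qed

lemma comp_swap_merge:
  assumes J: "J \<in> perfect_matchings n" and A: "A \<in> perfect_matchings n"
    and s: "s \<in> verts n" and t: "t \<in> verts n" and st: "s \<notin> comp (J \<union> A) t"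
  defines "E' \<equiv> J \<union> act (transpose s t) A"
  shows "comp E' t = comp (J \<union> A) s \<union> comp (J \<union> A) t"
proof -
  let ?Cs = "comp (J \<union> A) s" and ?Ct = "comp (J \<union> A) t"
  have \<sigma>: "transpose s t permutes verts n"
    using s t by (rule permutes_swap_id)
  have t_Cs: "t \<notin> ?Cs"
    using st comp_eq comp_refl by metis
  have Cs: "?Cs \<subseteq> comp E' s"
    using comp_subset_comp_swap[OF J A s t_Cs] by (simp add: E'_def)
  have Ct: "?Ct \<subseteq> comp E' t"
    using comp_subset_comp_swap[OF J A t st] by (simp add: E'_def transpose_commute)
  have b: "mate A s \<in> ?Cs" "mate A s \<noteq> s" "mate A s \<noteq> t"
    using mate_in_comp(2)[OF J A s] mate_neq[OF A s] t_Cs by auto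
  then have "mate (act (transpose s t) A) t = mate A s"
    using mate_act[OF A \<sigma> t] by simp
  then have "comp E' t = comp E' (mate A s)"
    using mate_in_comp(2)[OF J act_perfect_matching(1)[OF A \<sigma>] t] comp_eq
    unfolding E'_def by metis
  also have "\<dots> = comp E' s"
    using Cs b(1) comp_eq by blast
  finally have "?Cs \<union> ?Ct \<subseteq> comp E' t"
    using Cs Ct by blast
  moreover have "comp E' t \<subseteq> ?Cs \<union> ?Ct"
    unfolding E'_def
  proof (rule comp_swap_inside[OF J A])
    show "?Cs \<union> ?Ct \<subseteq> verts n"
      using comp_subset_verts[OF J A] s t by blast
    show "comp (J \<union> A) v \<subseteq> ?Cs \<union> ?Ct" if "v \<in> ?Cs \<union> ?Ct" for v
      using that comp_eq by blast
  qed (simp_all add: comp_refl)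
  ultimately show ?thesis
    by blast
qed

theorem swap_merges_components:
  assumes J: "J \<in> perfect_matchings n" and A: "A \<in> perfect_matchings n"
    and s: "s \<in> verts n" and t: "t \<in> verts n" and st: "s \<notin> comp (J \<union> A) t"
  defines "A' \<equiv> act (transpose s t) A"
  shows "card (comp (A' \<union> J) t) = card (comp (J \<union> A) s) + card (comp (J \<union> A) t)"
    and "dist n A' J = dist n J A - {#card (comp (J \<union> A) s), card (comp (J \<union> A) t)#}
                                  + {#card (comp (J \<union> A) s) + card (comp (J \<union> A) t)#}"
proof -
  let ?Cs = "comp (J \<union> A) s" and ?Ct = "comp (J \<union> A) t" and ?E' = "J \<union> A'"
  define S where "S = ?Cs \<union> ?Ct"
  have C': "comp ?E' t = S"
    unfolding S_def A'_def by (rule comp_swap_merge[OF assms(1-5)])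
  have ne: "?Cs \<noteq> ?Ct"
    using st comp_refl by blast
  have card_S: "card S = card ?Cs + card ?Ct"
    unfolding S_def using comp_disjoint[OF ne] finite_comp[OF J A] s t by (simp add: card_Un_disjoint)
  have "A' \<union> J = ?E'"
    by blast
  with C' card_S show "card (comp (A' \<union> J) t) = card ?Cs + card ?Ct"
    by simp
  have S_verts: "S \<subseteq> verts n"
    unfolding S_def using comp_subset_verts[OF J A] s t by blast
  have closed: "comp (J \<union> A) v \<subseteq> S" if "v \<in> S" for v
    using that comp_eq unfolding S_def by blast
  have sS: "s \<in> S" and tS: "t \<in> S"
    unfolding S_def by (simp_all add: comp_refl)
  have "comp (J \<union> A) ` S = {?Cs, ?Ct}"
    unfolding S_def image_Un comp_image_comp by blast
  moreover have "comp ?E' ` S = {S}"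
    using comp_image_comp[of ?E' t] C' by simp
  ultimately show "dist n A' J = dist n J A - {#card ?Cs, card ?Ct#} + {#card ?Cs + card ?Ct#}"
    using dist_swap_within_closed_set[OF J A S_verts closed sS tS] ne card_S
    by (simp add: A'_def)
qed

section \<open>Swapping two vertices of one alternating cycle\<close>

text \<open>An alternating cycle of \<open>J \<union> M\<close> listed as \<open>L!0, \<dots>, L!(N-1)\<close> with \<open>{L!0, L!1} \<in> J\<close> has
  the \<open>J\<close>-edges \<open>{L!2i, L!(2i+1)}\<close> and the \<open>M\<close>-edges \<open>{L!(2i+1), L!((2i+2) mod N)}\<close>.\<close>

definition j_partner_pos :: "nat \<Rightarrow> nat" where
  "j_partner_pos i = (if even i then i + 1 else i - 1)"

definition m_partner_pos :: "nat \<Rightarrow> nat \<Rightarrow> nat" where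
  "m_partner_pos N i =
    (if odd i then (if i + 1 = N then 0 else i + 1) else (if i = 0 then N - 1 else i - 1))"

definition swapped_partner_pos :: "nat \<Rightarrow> nat \<Rightarrow> nat \<Rightarrow> nat" where
  "swapped_partner_pos N p i = transpose p 1 (m_partner_pos N (transpose p 1 i))"

lemma m_partner_pos_less: "even N \<Longrightarrow> i < N \<Longrightarrow> m_partner_pos N i < N"
  by (cases "even i"; auto simp: m_partner_pos_def; presburger)

lemma odd_swap_positions:
  assumes "odd p" "3 \<le> p" "p < N" "even N"
  defines "g \<equiv> swapped_partner_pos N p"
  shows "i \<in> {2..p} \<Longrightarrow> j_partner_pos i \<in> {2..p} \<and> g i \<in> {2..p}"
    and "p + 1 \<le> i \<Longrightarrow> i < N - 1 \<Longrightarrow> Suc i = j_partner_pos i \<or> Suc i = g i"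
    and "2 \<le> i \<Longrightarrow> i < p \<Longrightarrow> Suc i = j_partner_pos i \<or> Suc i = g i"
    and "p + 1 < N \<Longrightarrow> g 1 = p + 1"
  using assms
  by (cases "even i"; auto simp: j_partner_pos_def m_partner_pos_def swapped_partner_pos_def transpose_def;
      presburger)+

lemma even_swap_positions:
  assumes "even p" "2 \<le> p" "p < N" "even N"
  defines "g \<equiv> swapped_partner_pos N p"
  shows "p \<le> i \<Longrightarrow> i < N - 1 \<Longrightarrow> Suc i = j_partner_pos i \<or> Suc i = g i"
    and "2 \<le> i \<Longrightarrow> i < p - 1 \<Longrightarrow> Suc i = j_partner_pos i \<or> Suc i = g i"
    and "g 0 = N - 1"
    and "4 \<le> p \<Longrightarrow> g 1 = p - 1"
  using assms
  by (cases "even i"; auto simp: j_partner_pos_def m_partner_pos_def swapped_partner_pos_def transpose_def;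
      presburger)+

locale alternating_cycle =
  fixes n :: nat and J A :: "nat set set" and L :: "nat list" and N :: nat
  assumes J: "J \<in> perfect_matchings n" and A: "A \<in> perfect_matchings n"
    and length_L: "length L = N" and N_ge_4: "4 \<le> N" and even_N: "even N"
    and distinct_L: "distinct L"
    and component: "set L = comp (J \<union> A) (L ! 1)"
    and first_edge: "{L ! 0, L ! 1} \<in> J"
    and cycle_edges: "\<And>m. m < N \<Longrightarrow> {L ! m, L ! ((m + 1) mod N)} \<in> J \<union> A"
begin

lemma set_L_verts: "set L \<subseteq> verts n"
proof -
  have "{L ! 1, L ! 0} \<in> J"
    using first_edge by (simp add: insert_commute)
  then have "L ! 1 \<in> verts n"
    by (rule edge_in_verts[OF J])
  then show ?thesis
    using component comp_subset_verts[OF J A] by simp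
qed

lemma nth_in_verts: "i < N \<Longrightarrow> L ! i \<in> verts n"
  using set_L_verts length_L by auto

lemma nth_eq_iff: "i < N \<Longrightarrow> j < N \<Longrightarrow> L ! i = L ! j \<longleftrightarrow> i = j"
  using distinct_L length_L by (simp add: nth_eq_iff_index_eq)

lemma alternating_edges:
  "m < N \<Longrightarrow> {L ! m, L ! ((m + 1) mod N)} \<in> (if even m then J else A)"
proof (induction m)
  case 0
  then show ?case
    using first_edge N_ge_4 by simp
next
  case (Suc m)
  let ?a = "L ! m" and ?b = "L ! Suc m" and ?c = "L ! ((Suc m + 1) mod N)"
  have b: "?b \<in> verts n"
    using nth_in_verts Suc.prems .
  have "(Suc m + 1) mod N \<noteq> m"
  proof (cases "Suc m + 1 < N")
    case False
    with Suc.prems have "Suc m + 1 = N"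
      by simp
    with N_ge_4 show ?thesis
      by simp
  qed simp
  then have "?a \<noteq> ?c"
    using Suc.prems nth_eq_iff by simp
  moreover have "{?b, ?a} \<in> (if even m then J else A)"
    using Suc by (simp add: insert_commute)
  ultimately have "{?b, ?c} \<notin> (if even m then J else A)"
    using mate_iff[OF J b] mate_iff[OF A b] by (auto split: if_splits)
  then show ?case
    using cycle_edges[OF Suc.prems] by auto
qed

lemma mate_nth_edge:
  assumes M: "M \<in> perfect_matchings n" and m: "m < N"
    and edge: "{L ! m, L ! ((m + 1) mod N)} \<in> M"
  shows "mate M (L ! m) = L ! ((m + 1) mod N)" and "mate M (L ! ((m + 1) mod N)) = L ! m"
proof -
  have k: "(m + 1) mod N < N"
    using N_ge_4 by simp
  show "mate M (L ! m) = L ! ((m + 1) mod N)"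
    using mate_iff[OF M nth_in_verts[OF m]] edge by simp
  show "mate M (L ! ((m + 1) mod N)) = L ! m"
    using mate_iff[OF M nth_in_verts[OF k], of "L ! m"] edge by (simp add: insert_commute)
qed

lemma mate_nth:
  assumes i: "i < N"
  shows "mate J (L ! i) = L ! j_partner_pos i" and "mate A (L ! i) = L ! m_partner_pos N i"
proof -
  have pred: "i - 1 < N" "(i - 1 + 1) mod N = i" if "i \<noteq> 0"
    using i that by simp_all
  show "mate J (L ! i) = L ! j_partner_pos i"
  proof (cases "even i")
    case True
    with i even_N have "(i + 1) mod N = i + 1"
      by (metis Suc_eq_plus1 Suc_leI even_Suc le_neq_implies_less mod_less)
    then show ?thesis
      using mate_nth_edge(1)[OF J i] alternating_edges[OF i] True by (simp add: j_partner_pos_def)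
  next
    case False
    then have "i \<noteq> 0"
      by presburger
    then show ?thesis
      using mate_nth_edge(2)[OF J pred(1)] alternating_edges[OF pred(1)] pred False
      by (simp add: j_partner_pos_def)
  qed
  show "mate A (L ! i) = L ! m_partner_pos N i"
  proof -
    consider "odd i" | "even i" "i = 0" | "even i" "i \<noteq> 0"
      by blast
    then show ?thesis
    proof cases
      case 1
      then have "(i + 1) mod N = m_partner_pos N i"
        using i by (simp add: m_partner_pos_def)
      then show ?thesis
        using mate_nth_edge(1)[OF A i] alternating_edges[OF i] 1 by simp
    next
      case 2
      have last: "N - 1 < N" "odd (N - 1)" "(N - 1 + 1) mod N = 0"
        using N_ge_4 even_N by auto
      then have "{L ! (N - 1), L ! ((N - 1 + 1) mod N)} \<in> A"
        using alternating_edges[OF last(1)] by simp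
      then show ?thesis
        using mate_nth_edge(2)[OF A last(1)] last(3) 2 by (simp add: m_partner_pos_def)
    next
      case 3
      then show ?thesis
        using mate_nth_edge(2)[OF A pred(1)] alternating_edges[OF pred(1)] pred
        by (simp add: m_partner_pos_def)
    qed
  qed
qed

lemma card_component: "card (comp (J \<union> A) (L ! 1)) = N"
  using component distinct_card[OF distinct_L] length_L by simp

lemma N_in_dist: "N \<in># dist n J A"
proof -
  have "set L \<in> components n (J \<union> A)"
    using component nth_in_verts N_ge_4 unfolding components_def by simp
  moreover have "card (set L) = N"
    using card_component component by simp
  ultimately have "N \<in> card ` components n (J \<union> A)"
    by (metis image_eqI)
  then show ?thesis
    unfolding dist_def components_def by (simp add: finite_verts)
qed

abbreviation swapped :: "nat \<Rightarrow> nat set set" where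
  "swapped p \<equiv> act (transpose (L ! p) (L ! 1)) A"

lemma transpose_nth:
  "p < N \<Longrightarrow> q < N \<Longrightarrow> i < N \<Longrightarrow> transpose (L ! p) (L ! q) (L ! i) = L ! transpose p q i"
  using nth_eq_iff by (auto simp: transpose_def)

lemma swapped_perfect_matching: "p < N \<Longrightarrow> swapped p \<in> perfect_matchings n"
  using act_perfect_matching(1)[OF A permutes_swap_id] nth_in_verts N_ge_4 by simp

lemma mate_swapped_nth:
  assumes p: "p < N" and i: "i < N"
  shows "mate (swapped p) (L ! i) = L ! swapped_partner_pos N p i"
proof -
  have one: "1 < N"
    using N_ge_4 by simp
  have \<tau>: "transpose p 1 i < N"
    using p i one by (simp add: transpose_def)
  have "mate (swapped p) (L ! i) = transpose (L ! p) (L ! 1) (mate A (transpose (L ! p) (L ! 1) (L ! i)))"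
    using mate_act[OF A permutes_swap_id[OF nth_in_verts[OF p] nth_in_verts[OF one]]
        nth_in_verts[OF i]]
    by simp
  also have "\<dots> = transpose (L ! p) (L ! 1) (L ! m_partner_pos N (transpose p 1 i))"
    by (simp only: transpose_nth[OF p one i] mate_nth(2)[OF \<tau>])
  also have "\<dots> = L ! swapped_partner_pos N p i"
    unfolding swapped_partner_pos_def by (rule transpose_nth[OF p one m_partner_pos_less[OF even_N \<tau>]])
  finally show ?thesis .
qed

lemma adj_swapped_nth:
  assumes "p < N" "i < N" "i' = j_partner_pos i \<or> i' = swapped_partner_pos N p i"
  shows "(L ! i, L ! i') \<in> adj (J \<union> swapped p)"
  using assms adj_Un_iff[OF J swapped_perfect_matching] nth_in_verts mate_nth(1) mate_swapped_nth
  by auto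

lemma comp_swapped_eq_along:
  assumes p: "p < N" and b: "b < N"
    and step: "\<And>i. a \<le> i \<Longrightarrow> i < b \<Longrightarrow> Suc i = j_partner_pos i \<or> Suc i = swapped_partner_pos N p i"
    and "a \<le> c" "c \<le> b"
  shows "comp (J \<union> swapped p) (L ! c) = comp (J \<union> swapped p) (L ! a)"
proof (rule comp_eq_along_path[where x = "nth L", OF _ assms(4,5)])
  fix i assume "a \<le> i" "i < b"
  with b show "(L ! i, L ! Suc i) \<in> adj (J \<union> swapped p)"
    using adj_swapped_nth[OF p _ step] by simp
qed

lemma comp_swapped_subset:
  assumes p: "p < N" and "i \<in> K" "K \<subseteq> {..<N}"
    and closed: "\<And>i. i \<in> K \<Longrightarrow> j_partner_pos i \<in> K \<and> swapped_partner_pos N p i \<in> K"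
  shows "comp (J \<union> swapped p) (L ! i) \<subseteq> nth L ` K"
proof (rule comp_subset_mate_closed[OF J swapped_perfect_matching[OF p]])
  show "L ! i \<in> nth L ` K"
    using assms(2) by simp
  fix u assume "u \<in> nth L ` K"
  then obtain j where "j \<in> K" "u = L ! j"
    by blast
  then show "mate J u \<in> nth L ` K \<and> mate (swapped p) u \<in> nth L ` K"
    using closed assms(3) mate_nth(1) mate_swapped_nth[OF p] by auto
qed

lemma swap_within_cycle:
  assumes p: "p < N"
  shows comp_swapped_subset_set: "v \<in> set L \<Longrightarrow> comp (J \<union> swapped p) v \<subseteq> set L"
    and dist_swapped: "dist n (swapped p) J
      = dist n J A - {#N#} + image_mset card (mset_set (comp (J \<union> swapped p) ` set L))"
proof -
  have closed: "comp (J \<union> A) v \<subseteq> set L" if "v \<in> set L" for v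
    using that comp_eq component by blast
  have L: "L ! p \<in> set L" "L ! 1 \<in> set L"
    using p N_ge_4 length_L by auto
  show "comp (J \<union> swapped p) v \<subseteq> set L" if "v \<in> set L"
    using comp_swap_inside[OF J A set_L_verts closed L that] .
  have "comp (J \<union> A) ` set L = {set L}"
    using comp_image_comp component by metis
  moreover have "card (set L) = N"
    using card_component component by simp
  ultimately show "dist n (swapped p) J
      = dist n J A - {#N#} + image_mset card (mset_set (comp (J \<union> swapped p) ` set L))"
    using dist_swap_within_closed_set[OF J A set_L_verts closed L] by simp
qed

lemma set_L_eq_image: "set L = nth L ` {..<N}"
  using nth_image[of N L] length_L by (simp add: atLeast0LessThan)

lemma comp_swap_odd_position_inner:
  assumes p: "odd p" "3 \<le> p" "p < N"
  shows "comp (J \<union> swapped p) (L ! 2) = nth L ` {2..p}"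
proof
  note pos = odd_swap_positions[OF p even_N]
  show "comp (J \<union> swapped p) (L ! 2) \<subseteq> nth L ` {2..p}"
    by (rule comp_swapped_subset) (use p pos(1) in auto)
  have "comp (J \<union> swapped p) (L ! c) = comp (J \<union> swapped p) (L ! 2)" if "c \<in> {2..p}" for c
    by (rule comp_swapped_eq_along[OF p(3) p(3) pos(3)]) (use that in auto)
  then show "nth L ` {2..p} \<subseteq> comp (J \<union> swapped p) (L ! 2)"
    using comp_refl by blast
qed

lemma comp_swap_odd_position_outer:
  assumes p: "odd p" "3 \<le> p" "p < N"
  shows "comp (J \<union> swapped p) (L ! 1) = nth L ` ({0, 1} \<union> {p + 1..<N})"
proof -
  let ?E' = "J \<union> swapped p" and ?K1 = "{0, 1} \<union> {p + 1..<N}" and ?K2 = "{2..p}"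
  note pos = odd_swap_positions[OF p even_N]
  have "comp ?E' (L ! c) = comp ?E' (L ! 1)" if c: "c \<in> ?K1" for c
  proof -
    consider "c = 0" | "c = 1" | "p + 1 \<le> c" "c < N"
      using c by auto
    then show ?thesis
    proof cases
      case 1
      then show ?thesis
        using comp_adj adj_swapped_nth[OF p(3), of 1 0] N_ge_4 by (simp add: j_partner_pos_def)
    next
      case 3
      then have "comp ?E' (L ! c) = comp ?E' (L ! (p + 1))"
        by (intro comp_swapped_eq_along[OF p(3) _ pos(2)]) auto
      also have "\<dots> = comp ?E' (L ! 1)"
        using comp_adj adj_swapped_nth[OF p(3), of 1 "p + 1"] pos(4) 3 N_ge_4 by simp
      finally show ?thesis .
    qed simp
  qed
  then have "nth L ` ?K1 \<subseteq> comp ?E' (L ! 1)"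
    using comp_refl by blast
  moreover have "comp ?E' (L ! 1) \<subseteq> nth L ` ?K1 \<union> nth L ` ?K2"
  proof -
    have "{..<N} = ?K1 \<union> ?K2"
      using p by auto
    then show ?thesis
      using comp_swapped_subset_set[OF p(3)] N_ge_4 length_L set_L_eq_image by (simp add: image_Un)
  qed
  moreover have "comp ?E' (L ! 1) \<inter> nth L ` ?K2 = {}"
  proof -
    have "L ! 1 \<notin> nth L ` ?K2"
      using nth_eq_iff p(3) by fastforce
    then have "comp ?E' (L ! 1) \<noteq> comp ?E' (L ! 2)"
      using comp_swap_odd_position_inner[OF p] comp_refl by metis
    then show ?thesis
      using comp_disjoint comp_swap_odd_position_inner[OF p] by metis
  qed
  moreover have "X = P" if "P \<subseteq> X" "X \<subseteq> P \<union> Q" "X \<inter> Q = {}" for X P Q :: "nat set"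
    using that by blast
  ultimately show ?thesis
    by blast
qed

theorem swap_odd_position_splits_cycle:
  assumes p: "odd p" "3 \<le> p" "p < N"
  shows "dist n (swapped p) J = dist n J A - {#N#} + {#N - (p - 1), p - 1#}"
    and "card (comp (swapped p \<union> J) (L ! 1)) = N - (p - 1)"
proof -
  let ?E' = "J \<union> swapped p"
  note C1 = comp_swap_odd_position_outer[OF p] and C2 = comp_swap_odd_position_inner[OF p]
  have card_nth: "card (nth L ` K) = card K" if "K \<subseteq> {..<N}" for K
    by (intro card_image inj_on_nth distinct_L) (use that length_L in auto)
  have "card (comp ?E' (L ! 1)) = card ({0, 1} \<union> {p + 1..<N})"
    unfolding C1 by (rule card_nth) (use N_ge_4 in auto)
  then have card1: "card (comp ?E' (L ! 1)) = N - (p - 1)"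
    using p by (simp add: card_insert_if)
  have "card (comp ?E' (L ! 2)) = card {2..p}"
    unfolding C2 by (rule card_nth) (use p(3) in auto)
  then have card2: "card (comp ?E' (L ! 2)) = p - 1"
    by simp
  have "swapped p \<union> J = ?E'"
    by blast
  then show "card (comp (swapped p \<union> J) (L ! 1)) = N - (p - 1)"
    using card1 by simp
  have "L ! 1 \<notin> nth L ` {2..p}"
    using nth_eq_iff p(3) by fastforce
  then have "comp ?E' (L ! 1) \<noteq> comp ?E' (L ! 2)"
    using C2 comp_refl by metis
  moreover have "set L = comp ?E' (L ! 1) \<union> comp ?E' (L ! 2)"
  proof -
    have "{..<N} = ({0, 1} \<union> {p + 1..<N}) \<union> {2..p}"
      using p by auto
    then show ?thesis
      unfolding C1 C2 set_L_eq_image by (simp add: image_Un)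
  qed
  then have "comp ?E' ` set L = {comp ?E' (L ! 1), comp ?E' (L ! 2)}"
    by (simp add: image_Un comp_image_comp insert_commute)
  ultimately show "dist n (swapped p) J = dist n J A - {#N#} + {#N - (p - 1), p - 1#}"
    using dist_swapped[OF p(3)] card1 card2 by simp
qed

lemma comp_swap_even_position:
  assumes p: "even p" "2 \<le> p" "p < N"
  shows "comp (J \<union> swapped p) (L ! 1) = set L"
proof -
  let ?E' = "J \<union> swapped p"
  note pos = even_swap_positions[OF p even_N]
  have to_0: "comp ?E' (L ! 0) = comp ?E' (L ! 1)"
    using comp_adj adj_swapped_nth[OF p(3), of 1 0] N_ge_4 by (simp add: j_partner_pos_def)
  have "comp ?E' (L ! c) = comp ?E' (L ! 1)" if c: "c < N" for c
  proof -
    consider "c \<le> 1" | "2 \<le> c" "c < p" | "p \<le> c"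
      by linarith
    then show ?thesis
    proof cases
      case 1
      with to_0 show ?thesis
        by (cases c) auto
    next
      case 2
      then have "4 \<le> p"
        using p(1) by presburger
      have "comp ?E' (L ! c) = comp ?E' (L ! 2)"
        by (rule comp_swapped_eq_along[OF p(3) _ pos(2)]) (use 2 p(3) in auto)
      also have "\<dots> = comp ?E' (L ! (p - 1))"
        by (rule sym, rule comp_swapped_eq_along[OF p(3) _ pos(2)]) (use 2 p(3) in auto)
      also have "\<dots> = comp ?E' (L ! 1)"
        using comp_adj adj_swapped_nth[OF p(3), of 1 "p - 1"] pos(4)[OF \<open>4 \<le> p\<close>] N_ge_4 by simp
      finally show ?thesis .
    next
      case 3
      have "comp ?E' (L ! c) = comp ?E' (L ! p)"
        by (rule comp_swapped_eq_along[OF p(3) _ pos(1)]) (use 3 c in auto)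
      also have "\<dots> = comp ?E' (L ! (N - 1))"
        by (rule sym, rule comp_swapped_eq_along[OF p(3) _ pos(1)]) (use p in auto)
      also have "\<dots> = comp ?E' (L ! 0)"
        using comp_adj adj_swapped_nth[OF p(3), of 0 "N - 1"] pos(3) N_ge_4 by simp
      finally show ?thesis
        using to_0 by simp
    qed
  qed
  then have "set L \<subseteq> comp ?E' (L ! 1)"
    unfolding set_L_eq_image using comp_refl by blast
  moreover have "comp ?E' (L ! 1) \<subseteq> set L"
    using comp_swapped_subset_set[OF p(3)] N_ge_4 length_L by simp
  ultimately show ?thesis
    by blast
qed

theorem swap_even_position_keeps_cycle:
  assumes p: "even p" "2 \<le> p" "p < N"
  shows "dist n (swapped p) J = dist n J A"
    and "card (comp (swapped p \<union> J) (L ! 1)) = N"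
proof -
  note C = comp_swap_even_position[OF p]
  have "swapped p \<union> J = J \<union> swapped p"
    by blast
  then show "card (comp (swapped p \<union> J) (L ! 1)) = N"
    using C card_component component by simp
  have "comp (J \<union> swapped p) ` set L = {set L}"
    using comp_image_comp C by metis
  then show "dist n (swapped p) J = dist n J A"
    using dist_swapped[OF p(3)] N_in_dist card_component component by simp
qed

end

lemma alternating_cycle_from_listing:
  assumes n: "n \<ge> 1" and A: "A \<in> perfect_matchings n" and k: "1 \<le> k"
    and "length is = 2 * k" "distinct ([2 * n, 2 * n - 1] @ is)"
    and "set ([2 * n, 2 * n - 1] @ is) = comp (Jm n \<union> A) (2 * n - 1)"
    and "\<forall>m < length ([2 * n, 2 * n - 1] @ is).
      {([2 * n, 2 * n - 1] @ is) ! m, ([2 * n, 2 * n - 1] @ is) ! ((m + 1) mod (2 * k + 2))} \<in> Jm n \<union> A"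
  shows "alternating_cycle n (Jm n) A ([2 * n, 2 * n - 1] @ is) (2 * k + 2)"
proof
  show "{([2 * n, 2 * n - 1] @ is) ! 0, ([2 * n, 2 * n - 1] @ is) ! 1} \<in> Jm n"
    using n unfolding Jm_def by (auto simp: insert_commute)
qed (use assms Jm_perfect_matching in auto)

theorem lemma5p4:
  fixes n :: nat and A :: "nat set set"
  assumes n: "n \<ge> 1"
    and A: "A \<in> perfect_matchings n"
  shows
    "(\<forall>s. s \<in> verts n \<and> s \<notin> comp (Jm n \<union> A) (2*n - 1) \<longrightarrow>
        (let A' = act (transpose s (2*n - 1)) A in
          dist n A' (Jm n) =
            dist n (Jm n) A - {# card (comp (Jm n \<union> A) s), card (comp (Jm n \<union> A) (2*n - 1)) #}
              + {# card (comp (Jm n \<union> A) s) + card (comp (Jm n \<union> A) (2*n - 1)) #}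
          \<and> card (comp (A' \<union> Jm n) (2*n - 1)) =
              card (comp (Jm n \<union> A) s) + card (comp (Jm n \<union> A) (2*n - 1))))
   \<and> (\<forall>is k. length is = 2*k
        \<and> distinct ([2*n, 2*n - 1] @ is)
        \<and> set ([2*n, 2*n - 1] @ is) = comp (Jm n \<union> A) (2*n - 1)
        \<and> (\<forall>m < length ([2*n, 2*n - 1] @ is).
             {([2*n, 2*n - 1] @ is) ! m, ([2*n, 2*n - 1] @ is) ! ((m + 1) mod (2*k + 2))} \<in> Jm n \<union> A)
      \<longrightarrow> (\<forall>j. 1 \<le> j \<and> j \<le> k \<longrightarrow>
            (let A' = act (transpose (is ! (2*j - 1)) (2*n - 1)) A;
                 ct = card (comp (Jm n \<union> A) (2*n - 1)) in
              dist n A' (Jm n) = dist n (Jm n) A - {# ct #} + {# ct - 2*j, 2*j #}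
              \<and> card (comp (A' \<union> Jm n) (2*n - 1)) = ct - 2*j)
          \<and> (let A' = act (transpose (is ! (2*j - 2)) (2*n - 1)) A;
                 ct = card (comp (Jm n \<union> A) (2*n - 1)) in
              dist n A' (Jm n) = dist n (Jm n) A
              \<and> card (comp (A' \<union> Jm n) (2*n - 1)) = ct)))"
proof (intro conjI allI impI, goal_cases)
  case (1 s)
  moreover have "2 * n - 1 \<in> verts n"
    using n by (simp add: verts_def)
  ultimately show ?case
    using swap_merges_components[OF Jm_perfect_matching A] by (simp add: Let_def)
next
  case (2 "is" k j)
  define L where "L = [2 * n, 2 * n - 1] @ is"
  interpret alternating_cycle n "Jm n" A L "2 * k + 2"
    using alternating_cycle_from_listing[OF n A] 2 by (simp add: L_def)
  have "is ! (2 * j - 1) = L ! (2 * j + 1)" "2 * n - 1 = L ! 1"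
    using 2 by (simp_all add: L_def nth_append)
  then show ?case
    using swap_odd_position_splits_cycle[of "2 * j + 1"] card_component 2 by (simp add: Let_def)
next
  case (3 "is" k j)
  define L where "L = [2 * n, 2 * n - 1] @ is"
  interpret alternating_cycle n "Jm n" A L "2 * k + 2"
    using alternating_cycle_from_listing[OF n A] 3 by (simp add: L_def)
  have "is ! (2 * j - 2) = L ! (2 * j)" "2 * n - 1 = L ! 1"
    using 3 by (simp_all add: L_def nth_append numeral_2_eq_2)
  then show ?case
    using swap_even_position_keeps_cycle[of "2 * j"] card_component 3 by (simp add: Let_def)
qed

end
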